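(* Let $N=\{1,\dots,n\}$, $n\ge2$, be a parallel-link network with unit demand and latency functions $\ell_i\in\mathcal{L}_c$. Suppose that $x_i(0)>0$ for all $i\in N$ (the untolled Wardrop equilibrium has full support). Let $c>0$ and $t\in\mathcal{T}(c)$. Then $x_i(t)>0$ and $t_i>0$ for all $i\in N$.
   Context: $\mathcal{L}_c$: strictly increasing, convex, continuously differentiable functions $\mathbb{R}_+\to\mathbb{R}_+$. Parallel links $N$, one unit of flow; flows $x\in\mathbb{R}^N_+$ with $\sum_ix_i=1$. For tolls $t\in\mathbb{R}^N_+$, $x(t)$ is the unique Wardrop equilibrium for $t$: for all $i,j$ with $x_i>0$, $\ell_i(x_i)+t_i\le \ell_j(x_j)+t_j$; $x(0)$ is the untolled Wardrop equilibrium. Profit of firm $i$: $\Pi_i(t)=t_ix_i(t)$. For $c\in\mathbb{R}_+$, $\mathcal{T}(c)$ is the set of $c$-capped subgame perfect Nash equilibria: toll vectors $t$ with $0\le t_i\le c$ for all $i$ such that for every $i$ and every $t'_i\in[0,c]$, $\Pi_i(t_i,t_{-i})\ge\Pi_i(t'_i,t_{-i})$ (flow recomputed as the Wardrop equilibrium). *)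

theory Defs
  imports "HOL-Analysis.Analysis"
begin

definition latency_class :: "(real \<Rightarrow> real) \<Rightarrow> bool" where
  "latency_class l \<longleftrightarrow>
     (\<forall>x\<ge>0. l x \<ge> 0) \<and> strict_mono_on {0..} l \<and> convex_on {0..} l \<and>
     (\<exists>l'. continuous_on {0..} l' \<and>
            (\<forall>x\<ge>0. (l has_real_derivative l' x) (at x within {0..})))"

definition feasible_flow :: "('n::finite \<Rightarrow> real) \<Rightarrow> bool" where
  "feasible_flow x \<longleftrightarrow> (\<forall>i. x i \<ge> 0) \<and> (\<Sum>i\<in>UNIV. x i) = 1"

definition wardrop :: "('n::finite \<Rightarrow> real \<Rightarrow> real) \<Rightarrow> ('n \<Rightarrow> real) \<Rightarrow> ('n \<Rightarrow> real) \<Rightarrow> bool" where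
  "wardrop l t x \<longleftrightarrow> feasible_flow x \<and>
     (\<forall>i j. x i > 0 \<longrightarrow> l i (x i) + t i \<le> l j (x j) + t j)"

definition eq_flow :: "('n::finite \<Rightarrow> real \<Rightarrow> real) \<Rightarrow> ('n \<Rightarrow> real) \<Rightarrow> ('n \<Rightarrow> real)" where
  "eq_flow l t = (THE x. wardrop l t x)"

definition profit :: "('n::finite \<Rightarrow> real \<Rightarrow> real) \<Rightarrow> ('n \<Rightarrow> real) \<Rightarrow> 'n \<Rightarrow> real" where
  "profit l t i = t i * eq_flow l t i"

definition capped_spne :: "('n::finite \<Rightarrow> real \<Rightarrow> real) \<Rightarrow> real \<Rightarrow> ('n \<Rightarrow> real) set" where
  "capped_spne l c = {t. (\<forall>i. 0 \<le> t i \<and> t i \<le> c) \<and>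
     (\<forall>i t'. 0 \<le> t' \<and> t' \<le> c \<longrightarrow> profit l t i \<ge> profit l (t(i := t')) i)}"

end

theory Submission
  imports Defs
begin

text \<open>The untolled equilibrium has full support, so all links share one latency level \<open>L\<close>,
  and \<open>l\<^sub>i(0) < L\<close> for every link. If firm \<open>i\<close> charged a toll \<open>\<epsilon> = min c (L - l\<^sub>i(0))\<close> while
  the other tolls stay nonnegative, link \<open>i\<close> would still carry flow: otherwise some other link
  \<open>j\<close> would carry more than in the untolled equilibrium and hence cost strictly more than the
  empty link \<open>i\<close>. So this deviation earns positive profit, hence so does the equilibrium toll
  \<open>t\<^sub>i\<close>, which forces \<open>t\<^sub>i > 0\<close> and \<open>x\<^sub>i(t) > 0\<close>.

  Since \<open>x(t)\<close> is defined by a definite description, the equilibrium must also be shown to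
  exist and be unique; existence comes from minimising the Beckmann potential
  over the (compact) simplex of feasible flows.\<close>

lemma latency_class_continuous_on: "latency_class f \<Longrightarrow> continuous_on {0..} f"
  unfolding latency_class_def by (metis DERIV_continuous_on atLeast_iff)

lemma latency_class_less: "latency_class f \<Longrightarrow> 0 \<le> a \<Longrightarrow> a < b \<Longrightarrow> f a < f b"
  unfolding latency_class_def strict_mono_on_def by auto

lemma latency_class_le: "latency_class f \<Longrightarrow> 0 \<le> a \<Longrightarrow> a \<le> b \<Longrightarrow> f a \<le> f b"
  by (metis latency_class_less order_le_less)

lemma integral_mono_on_bounds:
  fixes f :: "real \<Rightarrow> real"
  assumes "f integrable_on {a..b}" "mono_on {a..b} f" "a \<le> b"
  shows "(b - a) * f a \<le> integral {a..b} f" "integral {a..b} f \<le> (b - a) * f b"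
proof -
  have "integral {a..b} (\<lambda>_. f a) \<le> integral {a..b} f"
    using assms by (intro integral_le integrable_const_ivl) (auto simp: mono_on_def)
  then show "(b - a) * f a \<le> integral {a..b} f" using assms(3) by (simp add: mult.commute)
  have "integral {a..b} f \<le> integral {a..b} (\<lambda>_. f b)"
    using assms by (intro integral_le integrable_const_ivl) (auto simp: mono_on_def)
  then show "integral {a..b} f \<le> (b - a) * f b" using assms(3) by (simp add: mult.commute)
qed

lemma latency_integral_increment_bounds:
  assumes lc: "latency_class f" and "0 \<le> a" "a \<le> b"
  shows "(b - a) * f a \<le> integral {0..b} f - integral {0..a} f"
    and "integral {0..b} f - integral {0..a} f \<le> (b - a) * f b"
proof -
  have cont: "continuous_on {0..b} f"
    using latency_class_continuous_on[OF lc] by (rule continuous_on_subset) auto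
  have "integral {0..b} f - integral {0..a} f = integral {a..b} f"
    using Henstock_Kurzweil_Integration.integral_combine[OF assms(2,3)
        integrable_continuous_interval[OF cont]] by simp
  moreover have "f integrable_on {a..b}"
    using assms by (intro integrable_continuous_interval continuous_on_subset[OF cont]) auto
  moreover have "mono_on {a..b} f"
    using latency_class_le[OF lc] assms(2) by (auto simp: mono_on_def)
  ultimately show "(b - a) * f a \<le> integral {0..b} f - integral {0..a} f"
    and "integral {0..b} f - integral {0..a} f \<le> (b - a) * f b"
    using integral_mono_on_bounds assms(3) by auto
qed

lemma sum_UNIV_fun_upd:
  fixes g :: "'n::finite \<Rightarrow> 'b \<Rightarrow> 'c::ab_group_add"
  shows "(\<Sum>k\<in>UNIV. g k ((x(i := a)) k)) = (\<Sum>k\<in>UNIV. g k (x k)) - g i (x i) + g i a"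
proof -
  have "(\<Sum>k\<in>UNIV. g k ((x(i := a)) k)) = g i a + (\<Sum>k\<in>UNIV - {i}. g k (x k))"
    by (simp add: sum.remove[of UNIV i])
  also have "\<dots> = (\<Sum>k\<in>UNIV. g k (x k)) - g i (x i) + g i a"
    by (simp add: sum.remove[of UNIV i])
  finally show ?thesis .
qed

lemma sum_eq_imp_exists_greater:
  fixes x y :: "'n::finite \<Rightarrow> real"
  assumes "sum x UNIV = sum y UNIV" "x k \<noteq> y k"
  shows "\<exists>i. y i < x i"
proof (rule ccontr)
  assume "\<not> (\<exists>i. y i < x i)"
  then have "\<forall>i. x i \<le> y i" by (auto simp: not_less)
  with assms(2) have "sum x UNIV < sum y UNIV"
    by (intro sum_strict_mono_ex1) (auto simp: order_le_less)
  with assms(1) show False by simp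
qed

lemma wardrop_unique:
  fixes l :: "'n::finite \<Rightarrow> real \<Rightarrow> real"
  assumes lc: "\<forall>i. latency_class (l i)" and x: "wardrop l t x" and y: "wardrop l t y"
  shows "x = y"
proof (rule ccontr)
  assume "x \<noteq> y"
  then obtain k where k: "x k \<noteq> y k" by auto
  have x0: "\<forall>i. x i \<ge> 0" and y0: "\<forall>i. y i \<ge> 0" and "sum x UNIV = sum y UNIV"
    using x y by (auto simp: wardrop_def feasible_flow_def)
  with k obtain i j where i: "y i < x i" and j: "x j < y j"
    using sum_eq_imp_exists_greater by metis
  have "l i (x i) + t i \<le> l j (x j) + t j"
    using x i y0 by (auto simp: wardrop_def intro: le_less_trans)
  moreover have "l j (y j) + t j \<le> l i (y i) + t i"
    using y j x0 by (auto simp: wardrop_def intro: le_less_trans)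
  moreover have "l j (x j) < l j (y j)" "l i (y i) < l i (x i)"
    using latency_class_less lc x0 y0 i j by auto
  ultimately show False by linarith
qed

definition beckmann_potential ::
    "('n::finite \<Rightarrow> real \<Rightarrow> real) \<Rightarrow> ('n \<Rightarrow> real) \<Rightarrow> ('n \<Rightarrow> real) \<Rightarrow> real" where
  "beckmann_potential l t x = (\<Sum>k\<in>UNIV. integral {0..x k} (l k) + t k * x k)"

lemma feasible_flow_le_1: "feasible_flow x \<Longrightarrow> x i \<le> 1"
  using member_le_sum[of i UNIV x] by (simp add: feasible_flow_def)

lemma compact_feasible_flows: "compact {x::'n::finite \<Rightarrow> real. feasible_flow x}"
proof -
  have "{x::'n \<Rightarrow> real. feasible_flow x} = PiE UNIV (\<lambda>_. {0..1}) \<inter> {x. sum x UNIV = 1}"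
  proof (intro equalityI subsetI)
    fix x :: "'n \<Rightarrow> real" assume "x \<in> {x. feasible_flow x}"
    then show "x \<in> PiE UNIV (\<lambda>_. {0..1}) \<inter> {x. sum x UNIV = 1}"
      by (auto simp: feasible_flow_le_1) (simp_all add: feasible_flow_def)
  qed (auto simp: feasible_flow_def)
  moreover have
    "compactin (product_topology (\<lambda>_. euclidean) UNIV) (PiE UNIV (\<lambda>_::'n. {0..1::real}))"
    by (simp add: compactin_PiE)
  then have "compact (PiE UNIV (\<lambda>_::'n. {0..1::real}))"
    by (simp add: euclidean_product_topology compactin_euclidean_iff)
  moreover have "closed {x::'n \<Rightarrow> real. sum x UNIV = 1}"
    by (intro closed_Collect_eq continuous_intros continuous_on_sum) auto
  ultimately show ?thesis by (simp add: compact_Int_closed)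
qed

lemma continuous_on_beckmann_potential:
  assumes lc: "\<forall>i. latency_class (l i)"
  shows "continuous_on {x. feasible_flow x} (beckmann_potential l t)"
  unfolding beckmann_potential_def
proof (intro continuous_on_sum)
  fix k
  have "continuous_on {0..} (l k)" using lc latency_class_continuous_on by blast
  then have "continuous_on {0..1} (l k)" by (rule continuous_on_subset) auto
  then have "continuous_on {0..1} (\<lambda>y. integral {0..y} (l k))"
    by (rule DERIV_continuous_on[OF integral_has_real_derivative])
  then have "continuous_on {0..1} (\<lambda>y. integral {0..y} (l k) + t k * y)"
    by (intro continuous_intros)
  then show "continuous_on {x. feasible_flow x} (\<lambda>x. integral {0..x k} (l k) + t k * x k)"
    by (rule continuous_on_compose2[of "{0..1}" _ _ "\<lambda>x. x k"])
      (auto simp: feasible_flow_le_1 feasible_flow_def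
        intro: continuous_on_subset[OF continuous_on_product_coordinates])
qed

lemma continuous_on_exists_positive_right:
  fixes h :: "real \<Rightarrow> real"
  assumes "continuous_on {0..b} h" "0 < b" "0 < h 0"
  shows "\<exists>d. 0 < d \<and> d \<le> b \<and> 0 < h d"
proof -
  obtain \<delta> where \<delta>: "\<delta> > 0" "\<forall>s\<in>{0..b}. dist s 0 < \<delta> \<longrightarrow> dist (h s) (h 0) < h 0"
    using assms unfolding continuous_on_iff by (meson atLeastAtMost_iff less_imp_le order_refl)
  define d where "d = min b (\<delta> / 2)"
  have "0 < d" "d \<le> b" "dist d 0 < \<delta>" using \<delta>(1) assms(2) by (auto simp: d_def)
  with \<delta>(2) show ?thesis by (intro exI[of _ d]) (auto simp: dist_real_def)
qed

text \<open>Moving a small amount of flow from a link to a strictly cheaper one lowers the potential.\<close>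
lemma wardrop_if_minimizes_potential:
  fixes l :: "'n::finite \<Rightarrow> real \<Rightarrow> real"
  assumes lc: "\<forall>i. latency_class (l i)" and feas: "feasible_flow x"
    and minimal: "\<forall>y. feasible_flow y \<longrightarrow> beckmann_potential l t x \<le> beckmann_potential l t y"
  shows "wardrop l t x"
  unfolding wardrop_def
proof (intro conjI allI impI feas)
  have x0: "\<And>k. 0 \<le> x k" using feas by (simp add: feasible_flow_def)
  fix i j assume xi: "x i > 0"
  show "l i (x i) + t i \<le> l j (x j) + t j"
  proof (rule ccontr)
    assume "\<not> ?thesis"
    then have ij: "i \<noteq> j" and gap: "l j (x j) + t j < l i (x i) + t i" by auto
    have "continuous_on {0..x i} (\<lambda>s. l i (x i - s))"
      by (rule continuous_on_compose2[OF latency_class_continuous_on])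
        (use lc in \<open>auto intro: continuous_intros\<close>)
    moreover have "continuous_on {0..x i} (\<lambda>s. l j (x j + s))"
      by (rule continuous_on_compose2[OF latency_class_continuous_on])
        (use lc x0 in \<open>auto intro: continuous_intros\<close>)
    ultimately have cont:
        "continuous_on {0..x i} (\<lambda>s. l i (x i - s) + t i - (l j (x j + s) + t j))"
      by (intro continuous_intros)
    obtain d where d: "0 < d" "d \<le> x i"
      and cheaper: "l j (x j + d) + t j < l i (x i - d) + t i"
      using continuous_on_exists_positive_right[OF cont xi] gap by auto
    define g where "g k y = integral {0..y} (l k) + t k * y" for k y
    define y where "y = x(i := x i - d, j := x j + d)"
    have "feasible_flow y"
      using feas sum_UNIV_fun_upd[of "\<lambda>_ v. v" "x(i := x i - d)" j "x j + d"]
        sum_UNIV_fun_upd[of "\<lambda>_ v. v" x i "x i - d"] ij d x0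
      by (auto simp: feasible_flow_def y_def)
    have "beckmann_potential l t y
        = beckmann_potential l t x - (g i (x i) - g i (x i - d)) + (g j (x j + d) - g j (x j))"
      using sum_UNIV_fun_upd[of g "x(i := x i - d)" j "x j + d"]
        sum_UNIV_fun_upd[of g x i "x i - d"] ij
      by (simp add: y_def beckmann_potential_def g_def[abs_def])
    moreover have "d * (l i (x i - d) + t i) \<le> g i (x i) - g i (x i - d)"
      using latency_integral_increment_bounds(1)[of "l i" "x i - d" "x i"] lc d
      by (simp add: g_def algebra_simps)
    moreover have "g j (x j + d) - g j (x j) \<le> d * (l j (x j + d) + t j)"
      using latency_integral_increment_bounds(2)[of "l j" "x j" "x j + d"] lc d x0
      by (simp add: g_def algebra_simps)
    moreover have "d * (l j (x j + d) + t j) < d * (l i (x i - d) + t i)"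
      using cheaper d by simp
    ultimately have "beckmann_potential l t y < beckmann_potential l t x" by linarith
    with minimal \<open>feasible_flow y\<close> show False by (simp add: not_le[symmetric])
  qed
qed

lemma wardrop_exists:
  fixes l :: "'n::finite \<Rightarrow> real \<Rightarrow> real"
  assumes lc: "\<forall>i. latency_class (l i)"
  shows "\<exists>x. wardrop l t x"
proof -
  obtain i0 :: 'n where True by simp
  define e where "e k = (if k = i0 then 1 else 0 :: real)" for k
  have "e \<in> {x. feasible_flow x}" by (simp add: e_def feasible_flow_def)
  then have ne: "{x::'n \<Rightarrow> real. feasible_flow x} \<noteq> {}" by blast
  obtain x :: "'n \<Rightarrow> real" where "x \<in> {x. feasible_flow x}"
      and "\<forall>y\<in>{x. feasible_flow x}. beckmann_potential l t x \<le> beckmann_potential l t y"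
    using continuous_attains_inf[OF compact_feasible_flows ne continuous_on_beckmann_potential[OF lc]]
    by blast
  then have "wardrop l t x" by (intro wardrop_if_minimizes_potential[OF lc]) auto
  then show ?thesis by blast
qed

lemma wardrop_eq_flow:
  fixes l :: "'n::finite \<Rightarrow> real \<Rightarrow> real"
  assumes lc: "\<forall>i. latency_class (l i)"
  shows "wardrop l t (eq_flow l t)"
proof -
  have "\<exists>!x. wardrop l t x" using wardrop_exists[OF lc] wardrop_unique[OF lc] by blast
  then show ?thesis unfolding eq_flow_def by (rule theI')
qed

lemma wardrop_full_support_equal_cost:
  assumes "wardrop l t x" "\<forall>k. x k > 0"
  shows "l i (x i) + t i = l j (x j) + t j"
proof -
  have "l i (x i) + t i \<le> l j (x j) + t j" "l j (x j) + t j \<le> l i (x i) + t i"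
    using assms unfolding wardrop_def by blast+
  then show ?thesis by linarith
qed

lemma wardrop_pos_if_toll_below_slack:
  fixes l :: "'n::finite \<Rightarrow> real \<Rightarrow> real"
  assumes lc: "\<forall>k. latency_class (l k)"
    and x0: "wardrop l (\<lambda>_. 0) x0" "\<forall>k. x0 k > 0"
    and y: "wardrop l t y" and t0: "\<forall>k. t k \<ge> 0" and ti: "l i 0 + t i \<le> l i (x0 i)"
  shows "y i > 0"
proof (rule ccontr)
  assume "\<not> y i > 0"
  moreover have "0 \<le> y i" using y by (simp add: wardrop_def feasible_flow_def)
  ultimately have yi: "y i = 0" by simp
  have "sum y UNIV = sum x0 UNIV"
    using x0 y by (simp add: wardrop_def feasible_flow_def)
  moreover have "y i \<noteq> x0 i" using x0(2) yi by (metis less_irrefl)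
  ultimately obtain j where j: "x0 j < y j" using sum_eq_imp_exists_greater by metis
  then have "y j > 0" using x0(2) by (meson less_trans)
  then have "l j (y j) + t j \<le> l i (y i) + t i" using y unfolding wardrop_def by blast
  then have "l j (y j) + t j \<le> l i 0 + t i" using yi by simp
  moreover have "l j (x0 j) < l j (y j)"
    using latency_class_less lc x0(2) j by (simp add: less_imp_le)
  moreover have "l i (x0 i) = l j (x0 j)"
    using wardrop_full_support_equal_cost[OF x0] by simp
  ultimately show False using ti t0[rule_format, of j] by linarith
qed

theorem mainTheorem3:
  fixes l :: "'n::finite \<Rightarrow> real \<Rightarrow> real" and c :: real and t :: "'n \<Rightarrow> real"
  assumes "CARD('n) \<ge> 2"
    and "\<forall>i. latency_class (l i)"
    and "\<forall>i. eq_flow l (\<lambda>_. 0) i > 0"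
    and "c > 0"
    and "t \<in> capped_spne l c"
  shows "\<forall>i. eq_flow l t i > 0 \<and> t i > 0"
proof
  fix i
  note lc = assms(2)
  define x0 where "x0 = eq_flow l (\<lambda>_. 0)"
  have x0: "wardrop l (\<lambda>_. 0) x0" "\<forall>k. x0 k > 0"
    using wardrop_eq_flow[OF lc] assms(3) by (auto simp: x0_def)
  have t: "\<forall>k. 0 \<le> t k \<and> t k \<le> c"
    and best: "\<forall>t'. 0 \<le> t' \<and> t' \<le> c \<longrightarrow> profit l (t(i := t')) i \<le> profit l t i"
    using assms(5) by (auto simp: capped_spne_def)
  define \<epsilon> where "\<epsilon> = min c (l i (x0 i) - l i 0)"
  have "l i 0 < l i (x0 i)" using latency_class_less lc x0(2) by auto
  then have \<epsilon>: "0 < \<epsilon>" "\<epsilon> \<le> c" "l i 0 + \<epsilon> \<le> l i (x0 i)"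
    using assms(4) by (auto simp: \<epsilon>_def)
  have "eq_flow l (t(i := \<epsilon>)) i > 0"
    using t \<epsilon> by (intro wardrop_pos_if_toll_below_slack[OF lc x0 wardrop_eq_flow[OF lc]]) auto
  then have "0 < profit l (t(i := \<epsilon>)) i" using \<epsilon> by (simp add: profit_def)
  also have "\<dots> \<le> t i * eq_flow l t i" using best \<epsilon> by (simp add: profit_def)
  finally have "0 < t i * eq_flow l t i" .
  moreover have "0 \<le> eq_flow l t i" "0 \<le> t i"
    using wardrop_eq_flow[OF lc, of t] t by (auto simp: wardrop_def feasible_flow_def)
  ultimately show "eq_flow l t i > 0 \<and> t i > 0"
    by (simp add: zero_less_mult_iff)
qed

end
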